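(* Let $n\ge1$ and let $\lambda=(\lambda_1\ge\cdots\ge\lambda_n\ge0)$ be a partition (padded with zeros to length $n$). Then $$|\mathrm{SVT}(\lambda,n)|=\sum_{k_1=0}^{0}\sum_{k_2=0}^{1}\cdots\sum_{k_n=0}^{n-1}\binom{0}{k_1}\binom{1}{k_2}\cdots\binom{n-1}{k_n}\prod_{1\le i<j\le n}\frac{\lambda_i-\lambda_j+k_i-k_j+j-i}{j-i}.$$
   Context: Let $[n]=\{1,\dots,n\}$. For a partition $\lambda$ with at most $n$ nonzero parts, identified with its Young diagram $\{(i,j):1\le j\le\lambda_i\}$ (row index $i$ increasing downward, column index $j$ to the right), a set-valued tableau of shape $\lambda$ with entries in $[n]$ assigns to each box $(i,j)$ a nonempty subset $T_{i,j}\subseteq[n]$ such that $\max T_{i,j}\le\min T_{i,j+1}$ and $\max T_{i,j}<\min T_{i+1,j}$ whenever these boxes exist. $\mathrm{SVT}(\lambda,n)$ denotes the set of all such tableaux. *)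

theory Defs
  imports "HOL-Analysis.Analysis"
begin

text \<open>A partition with at most n parts, given by its parts lam 1 >= ... >= lam n >= 0
  (indices 1..n; values outside 1..n are irrelevant).\<close>
definition is_partition_n :: "nat \<Rightarrow> (nat \<Rightarrow> nat) \<Rightarrow> bool" where
  "is_partition_n n lam \<longleftrightarrow> (\<forall>i. 1 \<le> i \<and> i < n \<longrightarrow> lam (Suc i) \<le> lam i)"

definition young_diagram :: "nat \<Rightarrow> (nat \<Rightarrow> nat) \<Rightarrow> (nat \<times> nat) set" where
  "young_diagram n lam = {(i, j). 1 \<le> i \<and> i \<le> n \<and> 1 \<le> j \<and> j \<le> lam i}"

definition SVT :: "(nat \<Rightarrow> nat) \<Rightarrow> nat \<Rightarrow> ((nat \<times> nat) \<Rightarrow> nat set) set" where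
  "SVT lam n = {T.
     (\<forall>b. b \<notin> young_diagram n lam \<longrightarrow> T b = {}) \<and>
     (\<forall>b\<in>young_diagram n lam. T b \<noteq> {} \<and> T b \<subseteq> {1..n}) \<and>
     (\<forall>i j. (i, j) \<in> young_diagram n lam \<and> (i, Suc j) \<in> young_diagram n lam
              \<longrightarrow> Max (T (i, j)) \<le> Min (T (i, Suc j))) \<and>
     (\<forall>i j. (i, j) \<in> young_diagram n lam \<and> (Suc i, j) \<in> young_diagram n lam
              \<longrightarrow> Max (T (i, j)) < Min (T (Suc i, j)))}"

end

theory Submission
  imports Defs "Jordan_Normal_Form.Determinant" "HOL-Computational_Algebra.Polynomial"
begin

text \<open>Deleting the entries \<open>n\<close> from a set-valued tableau of shape \<open>\<lambda>\<close> with entries in \<open>[n]\<close> leaves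
  one of a shape \<open>\<mu>\<close> interlacing \<open>\<lambda>\<close> with entries in \<open>[n - 1]\<close>; the deleted entries fill the
  horizontal strip \<open>\<lambda>/\<mu>\<close> and may also sit in the last box of every row with \<open>\<mu>\<^sub>i > \<lambda>\<^sub>i\<^sub>+\<^sub>1\<close>. Hence
  \<open>|SVT(\<lambda>, n)| = \<Sum>\<^sub>\<mu> 2^#{i. \<mu>\<^sub>i > \<lambda>\<^sub>i\<^sub>+\<^sub>1} |SVT(\<mu>, n - 1)|\<close>.

  The determinant \<open>det [h\<^sub>i\<^sub>-\<^sub>1(n - j; \<lambda>\<^sub>i + n - i)]\<close>, where \<open>h\<^sub>i(q; x) = \<Sum>\<^sub>k (i choose k) (x + k choose q)\<close>,
  obeys the same recursion: the row operations \<open>R\<^sub>a \<leftarrow> 2 R\<^sub>a - R\<^sub>a\<^sub>+\<^sub>1\<close> reduce it to size \<open>n - 1\<close>, the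
  new rows telescope into weighted sums over \<open>\<lambda>\<^sub>a\<^sub>+\<^sub>1 \<le> \<mu>\<^sub>a \<le> \<lambda>\<^sub>a\<close>, and multilinearity gives the sum
  over \<open>\<mu>\<close>. Expanding \<open>h\<close> multilinearly instead writes the determinant as
  \<open>\<Sum>\<^sub>k \<Prod>\<^sub>i (i - 1 choose k\<^sub>i) det [(\<lambda>\<^sub>i + k\<^sub>i + n - i choose n - j)]\<close>, and each of these determinants is a
  Vandermonde determinant equal to \<open>\<Prod>\<^sub>i\<^sub><\<^sub>j (y\<^sub>i - y\<^sub>j) / (j - i)\<close>.\<close>

section \<open>Determinants\<close>

lemma det_mat_Leibniz:
  "det (mat n n f) = (\<Sum>p | p permutes {0..<n}. signof p * (\<Prod>i=0..<n. f (i, p i)))"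
  by (subst det_def'[of _ n]) auto

lemma det_mat_mult: "det (mat n n f * mat n n g) = det (mat n n f) * det (mat n n g)"
  by (rule det_mult) auto

lemma index_mat_mult:
  assumes "i < n" "j < n"
  shows "(mat n n f * mat n n g) $$ (i, j) = (\<Sum>k<n. f (i, k) * g (k, j))"
  using assms by (simp add: scalar_prod_def atLeast0LessThan)

lemma det_mat_scale_rows:
  fixes c :: "nat \<Rightarrow> 'a::comm_ring_1"
  shows "det (mat n n (\<lambda>(i, j). c i * f i j)) = (\<Prod>i<n. c i) * det (mat n n (\<lambda>(i, j). f i j))"
  unfolding det_mat_Leibniz sum_distrib_left
  by (rule sum.cong) (auto simp: prod.distrib atLeast0LessThan ac_simps)

lemma det_last_row_zero:
  fixes B :: "'a::comm_ring_1 mat"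
  assumes "B \<in> carrier_mat (Suc n) (Suc n)" "\<And>j. j < n \<Longrightarrow> B $$ (n, j) = 0"
  shows "det B = B $$ (n, n) * det (mat_delete B n n)"
proof -
  have "det B = (\<Sum>j<Suc n. B $$ (n, j) * cofactor B n j)"
    by (rule laplace_expansion_row[OF assms(1)]) simp
  then show ?thesis
    using assms(2) by (simp add: lessThan_Suc cofactor_def)
qed

lemma det_last_column_zero:
  fixes B :: "'a::comm_ring_1 mat"
  assumes "B \<in> carrier_mat (Suc n) (Suc n)" "\<And>i. i < n \<Longrightarrow> B $$ (i, n) = 0"
  shows "det B = B $$ (n, n) * det (mat_delete B n n)"
proof -
  have "det B = (\<Sum>i<Suc n. B $$ (i, n) * cofactor B i n)"
    by (rule laplace_expansion_column[OF assms(1)]) simp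
  then show ?thesis
    using assms(2) by (simp add: lessThan_Suc cofactor_def)
qed

text \<open>Row \<open>a\<close> of the matrix is indexed by \<open>Suc a\<close> in \<open>c\<close>, \<open>r\<close> and \<open>K\<close>.\<close>

lemma det_mat_sum_rows:
  fixes c :: "nat \<Rightarrow> 'b \<Rightarrow> 'a::comm_ring_1"
  assumes "\<And>i. i \<in> {1..n} \<Longrightarrow> finite (K i)"
  shows "det (mat n n (\<lambda>(a, b). \<Sum>k\<in>K (Suc a). c (Suc a) k * r (Suc a) k b)) =
    (\<Sum>f\<in>PiE {1..n} K. (\<Prod>i\<in>{1..n}. c i (f i)) * det (mat n n (\<lambda>(a, b). r (Suc a) (f (Suc a)) b)))"
proof -
  let ?P = "{p. p permutes {0..<n}}"
  have "det (mat n n (\<lambda>(a, b). \<Sum>k\<in>K (Suc a). c (Suc a) k * r (Suc a) k b)) =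
    (\<Sum>p\<in>?P. signof p * (\<Prod>i\<in>{1..n}. \<Sum>k\<in>K i. c i k * r i k (p (i - 1))))"
    unfolding det_mat_Leibniz
    by (intro sum.cong refl) (simp add: prod.atLeast1_atMost_eq atLeast0LessThan)
  also have "\<dots> = (\<Sum>p\<in>?P. \<Sum>f\<in>PiE {1..n} K.
      (\<Prod>i\<in>{1..n}. c i (f i)) * (signof p * (\<Prod>i\<in>{1..n}. r i (f i) (p (i - 1)))))"
    by (intro sum.cong refl, subst prod_sum_PiE)
      (auto simp: assms sum_distrib_left prod.distrib mult.left_commute)
  also have "\<dots> = (\<Sum>f\<in>PiE {1..n} K. (\<Prod>i\<in>{1..n}. c i (f i)) *
      (\<Sum>p\<in>?P. signof p * (\<Prod>i\<in>{1..n}. r i (f i) (p (i - 1)))))"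
    by (subst sum.swap) (simp add: sum_distrib_left)
  also have "\<dots> = (\<Sum>f\<in>PiE {1..n} K. (\<Prod>i\<in>{1..n}. c i (f i)) * det (mat n n (\<lambda>(a, b). r (Suc a) (f (Suc a)) b)))"
    unfolding det_mat_Leibniz
    by (intro sum.cong refl arg_cong2[where f = "(*)"]) (simp_all add: prod.atLeast1_atMost_eq atLeast0LessThan)
  finally show ?thesis .
qed

definition index_pairs :: "nat \<Rightarrow> (nat \<times> nat) set" where
  "index_pairs n = {(i, j). 1 \<le> i \<and> i < j \<and> j \<le> n}"

lemma finite_index_pairs: "finite (index_pairs n)"
  by (rule finite_subset[of _ "{1..n} \<times> {1..n}"]) (auto simp: index_pairs_def)

lemma index_pairs_0: "index_pairs 0 = {}"
  by (auto simp: index_pairs_def)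

lemma prod_index_pairs_Suc:
  "(\<Prod>(i, j)\<in>index_pairs (Suc n). g i j) = (\<Prod>(i, j)\<in>index_pairs n. g i j) * (\<Prod>i\<in>{1..n}. g i (Suc n))"
proof -
  have "index_pairs (Suc n) = index_pairs n \<union> (\<lambda>i. (i, Suc n)) ` {1..n}"
    by (auto simp: index_pairs_def le_Suc_eq)
  moreover have "index_pairs n \<inter> (\<lambda>i. (i, Suc n)) ` {1..n} = {}"
    by (auto simp: index_pairs_def)
  ultimately show ?thesis
    by (simp add: prod.union_disjoint finite_index_pairs prod.reindex inj_on_def)
qed

lemma det_vandermonde_Suc:
  fixes y :: "nat \<Rightarrow> 'a::comm_ring_1"
  shows "det (mat (Suc n) (Suc n) (\<lambda>(a, b). y (Suc a) ^ (n - b))) =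
    det (mat n n (\<lambda>(a, b). (y (Suc a) - y (Suc n)) * y (Suc a) ^ (n - 1 - b)))"
proof -
  define M where "M = mat (Suc n) (Suc n) (\<lambda>(a, b). y (Suc a) ^ (n - b))"
  text \<open>Subtracting \<open>y (Suc n)\<close> times its right neighbour from each column clears the last row
    except for its final entry \<open>1\<close>.\<close>
  define U where "U = mat (Suc n) (Suc n) (\<lambda>(k, j). if k = j then 1 else if k = Suc j then - y (Suc n) else 0)"
  define R where "R = mat n n (\<lambda>(a, b). (y (Suc a) - y (Suc n)) * y (Suc a) ^ (n - 1 - b))"
  have MU: "(M * U) $$ (i, j) = (if j < n then (y (Suc i) - y (Suc n)) * y (Suc i) ^ (n - 1 - j) else 1)"
    if "i < Suc n" "j < Suc n" for i j
  proof -
    have "(M * U) $$ (i, j) = (\<Sum>k<Suc n. (if k = j then y (Suc i) ^ (n - k) else 0)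
        + (if k = Suc j then - y (Suc n) * y (Suc i) ^ (n - k) else 0))"
      unfolding M_def U_def using that by (subst index_mat_mult) (auto intro!: sum.cong)
    moreover have "n - j = Suc (n - 1 - j)" if "j < n"
      using that by simp
    ultimately show ?thesis
      using that by (simp add: sum.distrib sum.delta' algebra_simps)
  qed
  have carrier: "M * U \<in> carrier_mat (Suc n) (Suc n)"
    unfolding M_def U_def by (rule mult_carrier_mat) auto
  have "det U = 1"
    unfolding U_def by (subst det_lower_triangular[of "Suc n"]) (auto simp: prod_list_diag_prod)
  then have "det M = det (M * U)"
    unfolding M_def U_def by (simp add: det_mat_mult)
  also have "\<dots> = det (mat_delete (M * U) n n)"
    using det_last_row_zero[OF carrier] by (simp add: MU)
  also have "mat_delete (M * U) n n = R"
  proof (rule eq_matI)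
    fix i j assume "i < dim_row R" "j < dim_col R"
    then show "mat_delete (M * U) n n $$ (i, j) = R $$ (i, j)"
      using carrier by (simp add: mat_delete_def MU R_def del: index_mult_mat)
  qed (simp_all add: mat_delete_def R_def M_def U_def)
  finally show ?thesis by (simp add: M_def R_def)
qed

lemma det_vandermonde:
  fixes y :: "nat \<Rightarrow> 'a::comm_ring_1"
  shows "det (mat n n (\<lambda>(a, b). y (Suc a) ^ (n - 1 - b))) = (\<Prod>(i, j)\<in>index_pairs n. y i - y j)"
proof (induction n)
  case 0
  then show ?case by (simp add: det_mat_Leibniz index_pairs_0)
next
  case (Suc n)
  have "det (mat (Suc n) (Suc n) (\<lambda>(a, b). y (Suc a) ^ (n - b))) =
      (\<Prod>a<n. y (Suc a) - y (Suc n)) * det (mat n n (\<lambda>(a, b). y (Suc a) ^ (n - 1 - b)))"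
    unfolding det_vandermonde_Suc by (rule det_mat_scale_rows)
  also have "\<dots> = (\<Prod>(i, j)\<in>index_pairs (Suc n). y i - y j)"
    unfolding Suc.IH by (simp add: prod_index_pairs_Suc prod.atLeast1_atMost_eq mult.commute)
  finally show ?case by simp
qed

definition gbinomial_poly :: "nat \<Rightarrow> real poly" where
  "gbinomial_poly m = Polynomial.smult (1 / fact m) (\<Prod>i = 0..<m. [:- of_nat i, 1:])"

lemma poly_gbinomial_poly: "poly (gbinomial_poly m) x = x gchoose m"
  using gbinomial_mult_fact[of m x] by (simp add: gbinomial_poly_def poly_prod field_simps)

lemma degree_gbinomial_poly: "degree (gbinomial_poly m) = m"
  by (simp add: gbinomial_poly_def degree_prod_eq_sum_degree)

lemma coeff_gbinomial_poly_degree: "coeff (gbinomial_poly m) m = 1 / fact m"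
proof -
  have "lead_coeff (\<Prod>i = 0..<m. [:- of_nat i, 1::real:]) = 1"
    by (simp add: lead_coeff_prod)
  then show ?thesis
    using degree_gbinomial_poly[of m] by (simp add: gbinomial_poly_def)
qed

lemma poly_eq_sum_lessThan:
  fixes x :: "'a::{comm_semiring_0,semiring_1}"
  assumes "degree p < n"
  shows "poly p x = (\<Sum>d<n. coeff p d * x ^ d)"
  unfolding poly_altdef
  by (rule sum.mono_neutral_left) (use assms in \<open>auto simp: coeff_eq_0\<close>)

lemma prod_index_pairs_diff: "(\<Prod>(i, j)\<in>index_pairs n. real (j - i)) = (\<Prod>b<n. fact b)"
proof (induction n)
  case 0
  then show ?case by (simp add: index_pairs_0)
next
  case (Suc n)
  have "(\<Prod>i\<in>{1..n}. real (Suc n - i)) = fact n"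
    by (simp add: prod.atLeast1_atMost_eq fact_prod_rev atLeast0LessThan)
  then show ?case by (simp add: prod_index_pairs_Suc Suc.IH)
qed

text \<open>The Vandermonde matrix times the lower triangular matrix of coefficients of the
  polynomials \<open>x gchoose (n - 1 - b)\<close>.\<close>

lemma det_gchoose:
  fixes y :: "nat \<Rightarrow> real"
  shows "det (mat n n (\<lambda>(a, b). y (Suc a) gchoose (n - 1 - b))) =
     (\<Prod>(i, j)\<in>index_pairs n. (y i - y j) / real (j - i))"
proof -
  define V where "V = mat n n (\<lambda>(a, k). y (Suc a) ^ (n - 1 - k))"
  define C where "C = mat n n (\<lambda>(k, b). coeff (gbinomial_poly (n - 1 - b)) (n - 1 - k))"
  have VC: "V * C = mat n n (\<lambda>(a, b). y (Suc a) gchoose (n - 1 - b))"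
  proof (rule eq_matI)
    fix a b assume "a < dim_row (mat n n (\<lambda>(a, b). y (Suc a) gchoose (n - 1 - b)))"
       "b < dim_col (mat n n (\<lambda>(a, b). y (Suc a) gchoose (n - 1 - b)))"
    then have ab: "a < n" "b < n" by auto
    have "(V * C) $$ (a, b) = (\<Sum>k<n. y (Suc a) ^ (n - 1 - k) * coeff (gbinomial_poly (n - 1 - b)) (n - 1 - k))"
      unfolding V_def C_def using ab by (subst index_mat_mult) auto
    also have "\<dots> = (\<Sum>d<n. coeff (gbinomial_poly (n - 1 - b)) d * y (Suc a) ^ d)"
      using sum.atLeastLessThan_rev[of "\<lambda>d. coeff (gbinomial_poly (n - 1 - b)) d * y (Suc a) ^ d" 0 n]
      by (simp add: atLeast0LessThan mult.commute)
    also have "\<dots> = y (Suc a) gchoose (n - 1 - b)"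
      using ab by (simp add: poly_eq_sum_lessThan[symmetric] degree_gbinomial_poly poly_gbinomial_poly)
    finally show "(V * C) $$ (a, b) = mat n n (\<lambda>(a, b). y (Suc a) gchoose (n - 1 - b)) $$ (a, b)"
      using ab by simp
  qed (auto simp: V_def C_def)
  have det_C: "det C = 1 / (\<Prod>b<n. fact b)"
  proof -
    have "det C = (\<Prod>b<n. 1 / fact (n - 1 - b))"
      unfolding C_def
      by (subst det_lower_triangular[of n])
        (auto simp: coeff_eq_0 degree_gbinomial_poly prod_list_diag_prod coeff_gbinomial_poly_degree atLeast0LessThan)
    also have "(\<Prod>b<n. fact (n - 1 - b) :: real) = (\<Prod>b<n. fact b)"
      using prod.atLeastLessThan_rev[of "\<lambda>b. fact b :: real" 0 n] by (simp add: atLeast0LessThan)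
    ultimately show ?thesis by (simp add: prod_dividef)
  qed
  have "det (mat n n (\<lambda>(a, b). y (Suc a) gchoose (n - 1 - b))) = det V * det C"
    unfolding VC[symmetric] V_def C_def by (rule det_mat_mult)
  also have "\<dots> = (\<Prod>(i, j)\<in>index_pairs n. y i - y j) / (\<Prod>(i, j)\<in>index_pairs n. real (j - i))"
    unfolding det_C prod_index_pairs_diff V_def det_vandermonde by simp
  finally show ?thesis
    by (simp add: prod_dividef case_prod_unfold)
qed

lemma det_choose:
  "det (mat n n (\<lambda>(a, b). real (x (Suc a) choose (n - 1 - b)))) =
     (\<Prod>(i, j)\<in>index_pairs n. (real (x i) - real (x j)) / real (j - i))"
  using det_gchoose[of n "\<lambda>i. real (x i)"] by (simp add: binomial_gbinomial)

section \<open>A determinant satisfying the branching recursion\<close>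

text \<open>\<open>shifted_choose i q\<close> is \<open>(1 + E)\<^sup>i\<close> applied to \<open>\<lambda>x. x choose q\<close>, where \<open>E\<close> is the shift \<open>x \<mapsto> x + 1\<close>.\<close>

fun shifted_choose :: "nat \<Rightarrow> nat \<Rightarrow> nat \<Rightarrow> nat" where
  "shifted_choose 0 q x = x choose q"
| "shifted_choose (Suc i) q x = shifted_choose i q x + shifted_choose i q (Suc x)"

lemma shifted_choose_Suc_Suc:
  "shifted_choose i (Suc q) (Suc x) = shifted_choose i (Suc q) x + shifted_choose i q x"
  by (induction i arbitrary: x) auto

lemma shifted_choose_0_right: "shifted_choose i 0 x = 2 ^ i"
  by (induction i arbitrary: x) auto

lemma sum_choose_Suc_weighted:
  fixes g :: "nat \<Rightarrow> nat"
  shows "(\<Sum>k\<le>Suc i. (Suc i choose k) * g k) = (\<Sum>k\<le>i. (i choose k) * g k) + (\<Sum>k\<le>i. (i choose k) * g (Suc k))"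
proof -
  have "(\<Sum>k\<le>Suc i. (Suc i choose k) * g k) = g 0 + (\<Sum>k\<le>i. (i choose k) * g (Suc k)) + (\<Sum>k\<le>i. (i choose Suc k) * g (Suc k))"
    by (subst sum.atMost_Suc_shift) (simp add: sum.distrib algebra_simps)
  moreover have "(\<Sum>k\<le>Suc i. (i choose k) * g k) = g 0 + (\<Sum>k\<le>i. (i choose Suc k) * g (Suc k))"
    by (subst sum.atMost_Suc_shift) simp
  moreover have "(\<Sum>k\<le>Suc i. (i choose k) * g k) = (\<Sum>k\<le>i. (i choose k) * g k)"
    by simp
  ultimately show ?thesis by simp
qed

lemma shifted_choose_eq_sum: "shifted_choose i q x = (\<Sum>k\<le>i. (i choose k) * ((x + k) choose q))"
proof (induction i arbitrary: x)
  case 0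
  then show ?case by simp
next
  case (Suc i)
  then show ?case using sum_choose_Suc_weighted[of i "\<lambda>k. (x + k) choose q"] by simp
qed

lemma shifted_choose_telescope:
  assumes "L \<le> U"
  shows "(\<Sum>v\<in>{L..U}. (if L < v then 2 else 1) * shifted_choose i q (v + c)) + shifted_choose (Suc i) (Suc q) (L + c)
     = 2 * shifted_choose i (Suc q) (Suc (U + c))"
  using assms
proof (induction U rule: dec_induct)
  case base
  then show ?case by (simp add: shifted_choose_Suc_Suc)
next
  case (step U)
  then have "{L..Suc U} = insert (Suc U) {L..U}" by auto
  with step show ?case by (simp add: shifted_choose_Suc_Suc)
qed

text \<open>Row operations \<open>R\<^sub>a \<leftarrow> 2 R\<^sub>a - R\<^sub>a\<^sub>+\<^sub>1\<close> (\<open>a < m\<close>) clear the last column except for its bottom entry.\<close>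

lemma det_mat_Suc_last_column_pow2:
  fixes A :: "nat \<Rightarrow> nat \<Rightarrow> 'a::{idom,ring_char_0}"
  assumes "\<And>a. a < Suc m \<Longrightarrow> A a m = 2 ^ a"
  shows "det (mat (Suc m) (Suc m) (\<lambda>(a, b). A a b)) = det (mat m m (\<lambda>(a, b). 2 * A a b - A (Suc a) b))"
proof -
  define T where "T = mat (Suc m) (Suc m) (\<lambda>(i, k). if k = i then (if i < m then 2 else 1) else if k = Suc i then -1 else 0 :: 'a)"
  define AA where "AA = mat (Suc m) (Suc m) (\<lambda>(a, b). A a b)"
  define R where "R = mat m m (\<lambda>(a, b). 2 * A a b - A (Suc a) b)"
  have TA: "(T * AA) $$ (i, j) = (if i < m then 2 * A i j - A (Suc i) j else A i j)"
    if "i < Suc m" "j < Suc m" for i j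
  proof -
    have "(T * AA) $$ (i, j) = (\<Sum>k<Suc m. (if k = i then (if i < m then 2 else 1) * A k j else 0)
        + (if k = Suc i then - A k j else 0))"
      unfolding T_def AA_def using that by (subst index_mat_mult) (auto intro!: sum.cong)
    then show ?thesis
      using that by (cases "i = m") (auto simp: sum.distrib sum.delta')
  qed
  have carrier: "T * AA \<in> carrier_mat (Suc m) (Suc m)"
    unfolding T_def AA_def by (rule mult_carrier_mat) auto
  have "det T = prod_list (diag_mat T)"
    by (rule det_upper_triangular[of _ "Suc m"]) (auto simp: T_def upper_triangular_def)
  also have "\<dots> = 2 ^ m"
    by (simp add: prod_list_diag_prod T_def atLeast0LessThan lessThan_Suc)
  finally have "2 ^ m * det AA = det (T * AA)"
    unfolding T_def AA_def by (simp add: det_mat_mult)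
  also have "\<dots> = 2 ^ m * det (mat_delete (T * AA) m m)"
    using det_last_column_zero[OF carrier] by (simp add: TA assms)
  also have "mat_delete (T * AA) m m = R"
  proof (rule eq_matI)
    fix i j assume "i < dim_row R" "j < dim_col R"
    then show "mat_delete (T * AA) m m $$ (i, j) = R $$ (i, j)"
      using carrier by (simp add: mat_delete_def TA R_def del: index_mult_mat)
  qed (simp_all add: mat_delete_def R_def T_def AA_def)
  finally show ?thesis
    unfolding AA_def R_def by simp
qed

lemma prod_if_eq_power_card:
  assumes "finite A"
  shows "(\<Prod>i\<in>A. if P i then c else 1) = c ^ card {i\<in>A. P i}"
  using assms by (simp add: prod.If_cases Collect_conj_eq Int_commute)

definition interlacing :: "(nat \<Rightarrow> nat) \<Rightarrow> nat \<Rightarrow> (nat \<Rightarrow> nat) set" where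
  "interlacing lam m = PiE {1..m} (\<lambda>i. {lam (Suc i)..lam i})"

definition free_rows :: "(nat \<Rightarrow> nat) \<Rightarrow> nat \<Rightarrow> (nat \<Rightarrow> nat) \<Rightarrow> nat set" where
  "free_rows lam m mu = {i\<in>{1..m}. lam (Suc i) < mu i}"

lemma finite_interlacing: "finite (interlacing lam m)"
  by (simp add: interlacing_def finite_PiE)

lemma finite_free_rows: "finite (free_rows lam m mu)"
  by (simp add: free_rows_def)

lemma is_partition_n_interlacing:
  assumes "mu \<in> interlacing lam m"
  shows "is_partition_n m mu"
  unfolding is_partition_n_def
proof (intro allI impI)
  fix i assume "1 \<le> i \<and> i < m"
  with assms have "mu (Suc i) \<le> lam (Suc i)" "lam (Suc i) \<le> mu i"
    by (auto simp: interlacing_def PiE_iff)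
  then show "mu (Suc i) \<le> mu i" by simp
qed

text \<open>The determinant \<open>det [h\<^sub>i\<^sub>-\<^sub>1(n - j; \<lambda>\<^sub>i + n - i)]\<close> from above, with rows and columns
  counted from \<open>0\<close>.\<close>

definition svt_det :: "nat \<Rightarrow> (nat \<Rightarrow> nat) \<Rightarrow> real" where
  "svt_det n lam = det (mat n n (\<lambda>(a, b). real (shifted_choose a (n - 1 - b) (lam (Suc a) + n - 1 - a))))"

lemma svt_det_0: "svt_det 0 lam = 1"
  by (simp add: svt_det_def det_mat_Leibniz)

lemma svt_det_Suc:
  assumes "is_partition_n (Suc m) lam"
  shows "svt_det (Suc m) lam = (\<Sum>mu\<in>interlacing lam m. 2 ^ card (free_rows lam m mu) * svt_det m mu)"
proof -
  define A where "A = (\<lambda>a b. real (shifted_choose a (m - b) (lam (Suc a) + m - a)))"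
  define c where "c = (\<lambda>i v. if lam (Suc i) < v then 2 else 1 :: real)"
  define r where "r = (\<lambda>i v b. real (shifted_choose (i - 1) (m - 1 - b) (v + m - i)))"
  have row: "2 * A a b - A (Suc a) b = (\<Sum>v\<in>{lam (Suc (Suc a))..lam (Suc a)}. c (Suc a) v * r (Suc a) v b)"
    if "a < m" "b < m" for a b
  proof -
    have "lam (Suc (Suc a)) \<le> lam (Suc a)"
      using assms that by (simp add: is_partition_n_def)
    note telescope = arg_cong[OF shifted_choose_telescope[OF this, of a "m - 1 - b" "m - 1 - a"], of real]
    have e: "m - b = Suc (m - 1 - b)" "lam (Suc a) + m - a = Suc (lam (Suc a) + (m - 1 - a))"
      "lam (Suc (Suc a)) + m - Suc a = lam (Suc (Suc a)) + (m - 1 - a)"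
      using that by auto
    have "2 * A a b - A (Suc a) b = real (\<Sum>v\<in>{lam (Suc (Suc a))..lam (Suc a)}.
        (if lam (Suc (Suc a)) < v then 2 else 1) * shifted_choose a (m - 1 - b) (v + (m - 1 - a)))"
      unfolding A_def e using telescope by simp
    then show ?thesis
      using that by (auto simp: c_def r_def of_nat_sum intro!: sum.cong)
  qed
  have "svt_det (Suc m) lam = det (mat (Suc m) (Suc m) (\<lambda>(a, b). A a b))"
    unfolding svt_det_def A_def by simp
  also have "\<dots> = det (mat m m (\<lambda>(a, b). 2 * A a b - A (Suc a) b))"
    by (rule det_mat_Suc_last_column_pow2) (simp add: A_def shifted_choose_0_right)
  also have "mat m m (\<lambda>(a, b). 2 * A a b - A (Suc a) b) =
      mat m m (\<lambda>(a, b). \<Sum>v\<in>{lam (Suc (Suc a))..lam (Suc a)}. c (Suc a) v * r (Suc a) v b)"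
    by (rule eq_matI) (simp_all add: row[simplified])
  also have "det \<dots> = (\<Sum>mu\<in>interlacing lam m. (\<Prod>i\<in>{1..m}. c i (mu i)) * det (mat m m (\<lambda>(a, b). r (Suc a) (mu (Suc a)) b)))"
    unfolding interlacing_def by (rule det_mat_sum_rows) simp
  also have "\<dots> = (\<Sum>mu\<in>interlacing lam m. 2 ^ card (free_rows lam m mu) * svt_det m mu)"
    by (intro sum.cong refl arg_cong2[where f = "(*)"])
      (simp_all add: c_def r_def svt_det_def free_rows_def prod_if_eq_power_card diff_diff_left)
  finally show ?thesis .
qed

lemma svt_det_eq_binomial_sum:
  "svt_det n lam = (\<Sum>k\<in>PiE {1..n} (\<lambda>i. {0..i - 1}).
       (\<Prod>i\<in>{1..n}. real ((i - 1) choose k i)) *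
       (\<Prod>(i, j)\<in>{(i, j). 1 \<le> i \<and> i < j \<and> j \<le> n}.
          (real_of_int (int (lam i) - int (lam j) + int (k i) - int (k j) + int j - int i))
          / real (j - i)))"
proof -
  define r where "r = (\<lambda>i k b. real ((lam i + k + n - i) choose (n - 1 - b)))"
  have rows: "real (shifted_choose a (n - 1 - b) (lam (Suc a) + n - 1 - a)) =
      (\<Sum>k\<in>{0..Suc a - 1}. real ((Suc a - 1) choose k) * r (Suc a) k b)" if "a < n" for a b
  proof -
    have "lam (Suc a) + k + n - Suc a = lam (Suc a) + n - 1 - a + k" for k
      using that by simp
    then show ?thesis
      by (simp add: r_def shifted_choose_eq_sum of_nat_sum atMost_atLeast0)
  qed
  have vandermonde: "det (mat n n (\<lambda>(a, b). r (Suc a) (k (Suc a)) b)) =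
      (\<Prod>(i, j)\<in>{(i, j). 1 \<le> i \<and> i < j \<and> j \<le> n}.
          (real_of_int (int (lam i) - int (lam j) + int (k i) - int (k j) + int j - int i)) / real (j - i))"
    for k :: "nat \<Rightarrow> nat"
    using det_choose[of n "\<lambda>i. lam i + k i + n - i"]
    unfolding index_pairs_def r_def by (auto simp: of_nat_diff intro!: prod.cong)
  have "svt_det n lam = det (mat n n (\<lambda>(a, b). \<Sum>k\<in>{0..Suc a - 1}. real ((Suc a - 1) choose k) * r (Suc a) k b))"
    unfolding svt_det_def by (rule arg_cong[of _ _ det], rule eq_matI) (simp_all add: rows[simplified])
  also have "\<dots> = (\<Sum>k\<in>PiE {1..n} (\<lambda>i. {0..i - 1}).
       (\<Prod>i\<in>{1..n}. real ((i - 1) choose k i)) * det (mat n n (\<lambda>(a, b). r (Suc a) (k (Suc a)) b)))"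
    by (rule det_mat_sum_rows) simp
  finally show ?thesis
    by (simp only: vandermonde)
qed

section \<open>Set-valued tableaux\<close>

lemma mem_young_diagram [simp]:
  "(i, j) \<in> young_diagram n lam \<longleftrightarrow> 1 \<le> i \<and> i \<le> n \<and> 1 \<le> j \<and> j \<le> lam i"
  by (simp add: young_diagram_def)

lemma finite_young_diagram: "finite (young_diagram n lam)"
proof -
  have "young_diagram n lam = (SIGMA i:{1..n}. {1..lam i})" by auto
  then show ?thesis by simp
qed

lemma finite_SVT: "finite (SVT lam n)"
proof (rule finite_subset)
  show "SVT lam n \<subseteq> {T. \<forall>b. (b \<in> young_diagram n lam \<longrightarrow> T b \<in> Pow {1..n}) \<and> (b \<notin> young_diagram n lam \<longrightarrow> T b = {})}"
    unfolding SVT_def by auto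
  show "finite \<dots>"
    by (rule finite_set_of_finite_funs) (auto simp: finite_young_diagram)
qed

lemma SVT_0: "SVT lam 0 = {\<lambda>_. {}}"
  unfolding SVT_def by (auto simp: young_diagram_def)

context
  fixes lam :: "nat \<Rightarrow> nat" and n :: nat and T :: "nat \<times> nat \<Rightarrow> nat set"
  assumes svt: "T \<in> SVT lam n"
begin

lemma svt_empty_outside: "b \<notin> young_diagram n lam \<Longrightarrow> T b = {}"
  using svt unfolding SVT_def by blast

lemma svt_box: "b \<in> young_diagram n lam \<Longrightarrow> T b \<noteq> {} \<and> T b \<subseteq> {1..n}"
  using svt unfolding SVT_def by auto

lemma svt_subset: "T b \<subseteq> {1..n}"
  using svt_box svt_empty_outside by (cases "b \<in> young_diagram n lam") auto

lemma svt_finite: "finite (T b)"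
  using svt_subset finite_subset by blast

lemma svt_row: "(i, j) \<in> young_diagram n lam \<Longrightarrow> (i, Suc j) \<in> young_diagram n lam \<Longrightarrow> Max (T (i, j)) \<le> Min (T (i, Suc j))"
  using svt unfolding SVT_def by blast

lemma svt_column: "(i, j) \<in> young_diagram n lam \<Longrightarrow> (Suc i, j) \<in> young_diagram n lam \<Longrightarrow> Max (T (i, j)) < Min (T (Suc i, j))"
  using svt unfolding SVT_def by blast

lemma svt_Min_le_Max: "b \<in> young_diagram n lam \<Longrightarrow> Min (T b) \<le> Max (T b)"
  using svt_box svt_finite by simp

lemma svt_row_mono:
  assumes "(i, j) \<in> young_diagram n lam" "(i, j') \<in> young_diagram n lam" "j < j'"
  shows "Max (T (i, j)) \<le> Min (T (i, j'))"
proof -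
  have "Suc j \<le> j'" using assms(3) by simp
  then show ?thesis using assms(2)
  proof (induction j' rule: dec_induct)
    case base
    then show ?case using assms(1) svt_row by blast
  next
    case (step k)
    then have k: "(i, k) \<in> young_diagram n lam" using assms(1) by auto
    have "Max (T (i, j)) \<le> Min (T (i, k))" using step.IH k by blast
    also have "\<dots> \<le> Max (T (i, k))" using svt_Min_le_Max k by blast
    also have "\<dots> \<le> Min (T (i, Suc k))" using svt_row k step.prems by blast
    finally show ?case .
  qed
qed

lemma svt_Max_eq_top: "n \<in> T b \<Longrightarrow> Max (T b) = n"
  using svt_finite svt_subset by (intro Max_eqI) fastforce+

lemma svt_eq_top:
  assumes "n \<le> Min (T b)" "T b \<noteq> {}"
  shows "T b = {n}"
proof -
  have "x = n" if "x \<in> T b" for x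
    using that svt_subset Min_le[OF svt_finite that] assms(1) by fastforce
  then show ?thesis using assms(2) by blast
qed

lemma svt_top_right:
  assumes "n \<in> T (i, j)" "(i, j') \<in> young_diagram n lam" "j < j'"
  shows "T (i, j') = {n}"
proof (rule svt_eq_top)
  have "(i, j) \<in> young_diagram n lam" using assms(1) svt_empty_outside by blast
  then show "n \<le> Min (T (i, j'))"
    using svt_row_mono assms svt_Max_eq_top by fastforce
  show "T (i, j') \<noteq> {}" using svt_box assms(2) by blast
qed

lemma svt_top_not_above:
  assumes "n \<in> T (i, j)"
  shows "(Suc i, j) \<notin> young_diagram n lam"
proof
  assume below: "(Suc i, j) \<in> young_diagram n lam"
  have "(i, j) \<in> young_diagram n lam" using assms svt_empty_outside by blast
  then have "n < Min (T (Suc i, j))" using svt_column below svt_Max_eq_top[OF assms] by fastforce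
  moreover have "Min (T (Suc i, j)) \<in> T (Suc i, j)" using svt_box[OF below] svt_finite by simp
  ultimately show False using svt_subset by fastforce
qed

lemma svt_row_index_le_Min:
  assumes "is_partition_n n lam"
  shows "(i, j) \<in> young_diagram n lam \<Longrightarrow> i \<le> Min (T (i, j))"
proof (induction i)
  case 0
  then show ?case by simp
next
  case (Suc i)
  have "Min (T (Suc i, j)) \<in> T (Suc i, j)" using svt_box[OF Suc.prems] svt_finite by simp
  show ?case
  proof (cases "i = 0")
    case True
    then show ?thesis using svt_subset \<open>Min (T (Suc i, j)) \<in> T (Suc i, j)\<close> by fastforce
  next
    case False
    have "lam (Suc i) \<le> lam i"
      using False assms Suc.prems unfolding is_partition_n_def by simp
    then have ij: "(i, j) \<in> young_diagram n lam"
      using False Suc.prems by simp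
    have "i \<le> Min (T (i, j))" using Suc.IH ij by blast
    also have "\<dots> \<le> Max (T (i, j))" using svt_Min_le_Max ij by blast
    also have "\<dots> < Min (T (Suc i, j))" using svt_column ij Suc.prems by blast
    finally show ?thesis by simp
  qed
qed

lemma svt_last_row:
  assumes "is_partition_n n lam" "(n, j) \<in> young_diagram n lam"
  shows "T (n, j) = {n}"
  using svt_row_index_le_Min[OF assms] svt_box[OF assms(2)] by (intro svt_eq_top) auto

end

section \<open>The branching rule\<close>

lemma eq_atLeastAtMost_card:
  fixes A :: "nat set"
  assumes "finite A" "A \<subseteq> {1..}" "\<And>j j'. j \<in> A \<Longrightarrow> 1 \<le> j' \<Longrightarrow> j' \<le> j \<Longrightarrow> j' \<in> A"
  shows "A = {1..card A}"
proof (cases "A = {}")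
  case False
  define M where "M = Max A"
  have "M \<in> A" using False assms(1) by (simp add: M_def)
  have "A = {1..M}"
  proof
    show "A \<subseteq> {1..M}" using assms(1,2) by (auto simp: M_def)
    show "{1..M} \<subseteq> A" using \<open>M \<in> A\<close> assms(3) by auto
  qed
  then show ?thesis by simp
qed simp

definition branching_data ::
    "(nat \<Rightarrow> nat) \<Rightarrow> nat \<Rightarrow> ((nat \<Rightarrow> nat) \<times> nat set \<times> (nat \<times> nat \<Rightarrow> nat set)) set" where
  "branching_data lam m = (SIGMA mu:interlacing lam m. Pow (free_rows lam m mu) \<times> SVT mu m)"

definition svt_extend ::
    "(nat \<Rightarrow> nat) \<Rightarrow> nat \<Rightarrow> (nat \<Rightarrow> nat) \<times> nat set \<times> (nat \<times> nat \<Rightarrow> nat set) \<Rightarrow> (nat \<times> nat \<Rightarrow> nat set)" where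
  "svt_extend lam m = (\<lambda>(mu, S, T'). \<lambda>(i, j). if (i, j) \<in> young_diagram m mu
      then T' (i, j) \<union> (if i \<in> S \<and> j = mu i then {Suc m} else {})
      else if (i, j) \<in> young_diagram (Suc m) lam then {Suc m} else {})"

text \<open>The shape occupied by the entries \<open>\<le> m\<close>; the boxes of row \<open>i\<close> that are not \<open>{m + 1}\<close> form an
  initial segment (\<open>lower_shape_iff\<close>), so counting them gives its length.\<close>

definition svt_lower_shape :: "(nat \<Rightarrow> nat) \<Rightarrow> nat \<Rightarrow> (nat \<times> nat \<Rightarrow> nat set) \<Rightarrow> nat \<Rightarrow> nat" where
  "svt_lower_shape lam m T = restrict (\<lambda>i. card {j\<in>{1..lam i}. T (i, j) \<noteq> {Suc m}}) {1..m}"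

definition svt_split ::
    "(nat \<Rightarrow> nat) \<Rightarrow> nat \<Rightarrow> (nat \<times> nat \<Rightarrow> nat set) \<Rightarrow> (nat \<Rightarrow> nat) \<times> nat set \<times> (nat \<times> nat \<Rightarrow> nat set)" where
  "svt_split lam m T = (svt_lower_shape lam m T, {i\<in>{1..m}. Suc m \<in> T (i, svt_lower_shape lam m T i)},
     \<lambda>b. if b \<in> young_diagram m (svt_lower_shape lam m T) then T b - {Suc m} else {})"

context
  fixes lam :: "nat \<Rightarrow> nat" and m :: nat and T :: "nat \<times> nat \<Rightarrow> nat set"
  assumes part: "is_partition_n (Suc m) lam" and svt: "T \<in> SVT lam (Suc m)"
begin

lemma lower_shape_iff:
  assumes i: "i \<in> {1..m}"
  shows "1 \<le> j \<and> j \<le> svt_lower_shape lam m T i \<longleftrightarrow> 1 \<le> j \<and> j \<le> lam i \<and> T (i, j) \<noteq> {Suc m}"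
proof -
  let ?Z = "{j\<in>{1..lam i}. T (i, j) \<noteq> {Suc m}}"
  have "?Z = {1..card ?Z}"
  proof (rule eq_atLeastAtMost_card)
    fix j j' assume j: "j \<in> ?Z" and j': "1 \<le> j'" "j' \<le> j"
    show "j' \<in> ?Z"
    proof (rule ccontr)
      assume "j' \<notin> ?Z"
      with j j' have "T (i, j') = {Suc m}" "j' \<noteq> j" by auto
      then have "T (i, j) = {Suc m}"
        using svt_top_right[OF svt, of i j' j] j j' i by auto
      then show False using j by auto
    qed
  qed auto
  then have "?Z = {1..svt_lower_shape lam m T i}"
    using i by (simp add: svt_lower_shape_def)
  then show ?thesis
    by (simp add: set_eq_iff)
qed

lemma lower_shape_le: "i \<in> {1..m} \<Longrightarrow> svt_lower_shape lam m T i \<le> lam i"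
  using lower_shape_iff[of i "svt_lower_shape lam m T i"] by (cases "svt_lower_shape lam m T i = 0") auto

lemma lower_shape_ge:
  assumes i: "i \<in> {1..m}"
  shows "lam (Suc i) \<le> svt_lower_shape lam m T i"
proof (cases "lam (Suc i) = 0")
  case False
  then have "(Suc i, lam (Suc i)) \<in> young_diagram (Suc m) lam" using i by auto
  then have "T (i, lam (Suc i)) \<noteq> {Suc m}"
    using svt_top_not_above[OF svt, of i "lam (Suc i)"] by auto
  moreover have "lam (Suc i) \<le> lam i" using part i unfolding is_partition_n_def by auto
  ultimately show ?thesis using lower_shape_iff[OF i, of "lam (Suc i)"] False by auto
qed simp

lemma lower_shape_interlacing: "svt_lower_shape lam m T \<in> interlacing lam m"
  using lower_shape_le lower_shape_ge by (auto simp: interlacing_def svt_lower_shape_def PiE_iff)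

lemma lower_diagram_not_top:
  assumes "(i, j) \<in> young_diagram m (svt_lower_shape lam m T)"
  shows "(i, j) \<in> young_diagram (Suc m) lam \<and> T (i, j) \<noteq> {Suc m}"
  using assms lower_shape_iff[of i j] by auto

lemma top_outside_lower_diagram:
  assumes "(i, j) \<in> young_diagram (Suc m) lam" "(i, j) \<notin> young_diagram m (svt_lower_shape lam m T)"
  shows "T (i, j) = {Suc m}"
proof (cases "i = Suc m")
  case True
  then show ?thesis using svt_last_row[OF svt part] assms(1) by simp
next
  case False
  then show ?thesis using assms lower_shape_iff[of i j] by auto
qed

lemma svt_split_free_rows:
  "{i\<in>{1..m}. Suc m \<in> T (i, svt_lower_shape lam m T i)} \<subseteq> free_rows lam m (svt_lower_shape lam m T)"
proof
  fix i
  let ?mu = "svt_lower_shape lam m T"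
  assume "i \<in> {i\<in>{1..m}. Suc m \<in> T (i, ?mu i)}"
  then have i: "i \<in> {1..m}" and top: "Suc m \<in> T (i, ?mu i)" by auto
  then have "1 \<le> ?mu i" using svt_empty_outside[OF svt, of "(i, ?mu i)"] by fastforce
  moreover have "(Suc i, ?mu i) \<notin> young_diagram (Suc m) lam"
    using svt_top_not_above[OF svt top] .
  ultimately show "i \<in> free_rows lam m ?mu"
    using i by (auto simp: free_rows_def)
qed

text \<open>Removing the entry \<open>m + 1\<close> keeps boxes of \<open>mu\<close> nonempty (they are not \<open>{m + 1}\<close>) and only
  lowers maxima (\<open>m + 1\<close> never sits left of or above another box of \<open>mu\<close>).\<close>

lemma svt_split_tableau:
  "(\<lambda>b. if b \<in> young_diagram m (svt_lower_shape lam m T) then T b - {Suc m} else {})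
     \<in> SVT (svt_lower_shape lam m T) m" (is "?T' \<in> SVT ?mu m")
  unfolding SVT_def
proof (intro CollectI conjI allI impI ballI)
  fix b assume "b \<notin> young_diagram m ?mu"
  then show "?T' b = {}" by simp
next
  fix b assume b: "b \<in> young_diagram m ?mu"
  then have "b \<in> young_diagram (Suc m) lam" "T b \<noteq> {Suc m}"
    using lower_diagram_not_top by (metis surj_pair)+
  then have "T b \<noteq> {Suc m}" "T b \<noteq> {}" "T b \<subseteq> {1..Suc m}"
    using svt_box[OF svt] by auto
  then show "?T' b \<noteq> {}" "?T' b \<subseteq> {1..m}" using b by auto
next
  fix i j assume a: "(i, j) \<in> young_diagram m ?mu \<and> (i, Suc j) \<in> young_diagram m ?mu"
  then have Y1: "(i, j) \<in> young_diagram (Suc m) lam" and Y2: "(i, Suc j) \<in> young_diagram (Suc m) lam"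
    and ne: "T (i, Suc j) \<noteq> {Suc m}"
    using lower_diagram_not_top by blast+
  have "Suc m \<notin> T (i, j)" using svt_top_right[OF svt _ Y2, of j] ne by auto
  then have "Max (?T' (i, j)) = Max (T (i, j))" using a by simp
  also have "\<dots> \<le> Min (T (i, Suc j))" using svt_row[OF svt Y1 Y2] .
  also have "\<dots> \<le> Min (?T' (i, Suc j))"
    using a ne svt_box[OF svt Y2] svt_finite[OF svt] by (auto intro!: Min_antimono)
  finally show "Max (?T' (i, j)) \<le> Min (?T' (i, Suc j))" .
next
  fix i j assume a: "(i, j) \<in> young_diagram m ?mu \<and> (Suc i, j) \<in> young_diagram m ?mu"
  then have Y1: "(i, j) \<in> young_diagram (Suc m) lam" and Y2: "(Suc i, j) \<in> young_diagram (Suc m) lam"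
    and ne: "T (Suc i, j) \<noteq> {Suc m}"
    using lower_diagram_not_top by blast+
  have "Suc m \<notin> T (i, j)" using svt_top_not_above[OF svt, of i j] Y2 by auto
  then have "Max (?T' (i, j)) = Max (T (i, j))" using a by simp
  also have "\<dots> < Min (T (Suc i, j))" using svt_column[OF svt Y1 Y2] .
  also have "\<dots> \<le> Min (?T' (Suc i, j))"
    using a ne svt_box[OF svt Y2] svt_finite[OF svt] by (auto intro!: Min_antimono)
  finally show "Max (?T' (i, j)) < Min (?T' (Suc i, j))" .
qed

lemma svt_split_mem: "svt_split lam m T \<in> branching_data lam m"
  using lower_shape_interlacing svt_split_free_rows svt_split_tableau
  unfolding svt_split_def branching_data_def by auto

lemma svt_extend_split: "svt_extend lam m (svt_split lam m T) = T"
proof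
  fix b :: "nat \<times> nat"
  obtain i j where b: "b = (i, j)" by force
  define mu where "mu = svt_lower_shape lam m T"
  show "svt_extend lam m (svt_split lam m T) b = T b"
  proof (cases "(i, j) \<in> young_diagram m mu")
    case True
    show ?thesis
    proof (cases "Suc m \<in> T (i, j)")
      case top: True
      have "j = mu i"
      proof (rule ccontr)
        assume "j \<noteq> mu i"
        then have "(i, Suc j) \<in> young_diagram m mu" using True by auto
        then show False
          using lower_diagram_not_top svt_top_right[OF svt top, of "Suc j"] by (auto simp: mu_def)
      qed
      then show ?thesis
        using True top b by (auto simp: svt_extend_def svt_split_def mu_def[symmetric])
    next
      case False
      then show ?thesis
        using True b by (auto simp: svt_extend_def svt_split_def mu_def[symmetric])
    qed
  next
    case False
    then show ?thesis
      using b top_outside_lower_diagram[of i j] svt_empty_outside[OF svt, of b]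
      by (auto simp: svt_extend_def svt_split_def mu_def[symmetric])
  qed
qed

end

lemma Min_Un_above:
  fixes A :: "nat set"
  assumes "finite A" "A \<noteq> {}" "A \<subseteq> {1..m}" "E \<subseteq> {Suc m}"
  shows "Min (A \<union> E) = Min A"
proof (cases "E = {}")
  case False
  then have E: "E = {Suc m}" using assms(4) by auto
  have "Min A \<in> A" using assms(1,2) by simp
  then have "Min A \<le> m" using assms(3) by auto
  show ?thesis
  proof (rule Min_eqI)
    show "finite (A \<union> E)" using assms(1) E by simp
    show "Min A \<in> A \<union> E" using \<open>Min A \<in> A\<close> by simp
    show "Min A \<le> y" if "y \<in> A \<union> E" for y
      using that E \<open>Min A \<le> m\<close> assms(1) by auto
  qed
qed simp

context
  fixes lam :: "nat \<Rightarrow> nat" and m :: nat and mu :: "nat \<Rightarrow> nat"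
    and S :: "nat set" and T' :: "nat \<times> nat \<Rightarrow> nat set"
  assumes data: "(mu, S, T') \<in> branching_data lam m"
begin

lemma data_interlacing: "i \<in> {1..m} \<Longrightarrow> lam (Suc i) \<le> mu i \<and> mu i \<le> lam i"
  using data by (auto simp: branching_data_def interlacing_def PiE_iff)

lemma data_extensional: "i \<notin> {1..m} \<Longrightarrow> mu i = undefined"
  using data by (auto simp: branching_data_def interlacing_def PiE_iff extensional_def)

lemma data_free_rows: "i \<in> S \<Longrightarrow> i \<in> {1..m} \<and> lam (Suc i) < mu i"
  using data by (auto simp: branching_data_def free_rows_def)

lemma data_tableau: "T' \<in> SVT mu m"
  using data by (auto simp: branching_data_def)

lemma data_diagram_subset: "(i, j) \<in> young_diagram m mu \<Longrightarrow> (i, j) \<in> young_diagram (Suc m) lam"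
  using data_interlacing[of i] by auto

lemma svt_extend_lower:
  "(i, j) \<in> young_diagram m mu \<Longrightarrow>
   svt_extend lam m (mu, S, T') (i, j) = T' (i, j) \<union> (if i \<in> S \<and> j = mu i then {Suc m} else {})"
  by (simp add: svt_extend_def)

lemma svt_extend_strip:
  "(i, j) \<notin> young_diagram m mu \<Longrightarrow>
   svt_extend lam m (mu, S, T') (i, j) = (if (i, j) \<in> young_diagram (Suc m) lam then {Suc m} else {})"
  unfolding svt_extend_def by (simp del: mem_young_diagram)

lemma svt_extend_Min:
  assumes "(i, j) \<in> young_diagram m mu"
  shows "Min (svt_extend lam m (mu, S, T') (i, j)) = Min (T' (i, j))"
proof -
  have "Min (svt_extend lam m (mu, S, T') (i, j)) = Min (T' (i, j) \<union> (if i \<in> S \<and> j = mu i then {Suc m} else {}))"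
    using svt_extend_lower[OF assms] by simp
  also have "\<dots> = Min (T' (i, j))"
    by (rule Min_Un_above) (use svt_finite[OF data_tableau] svt_box[OF data_tableau assms] in auto)
  finally show ?thesis .
qed

lemma svt_extend_subset: "svt_extend lam m (mu, S, T') b \<subseteq> {1..Suc m}"
proof -
  obtain i j where b: "b = (i, j)" by force
  have "svt_extend lam m (mu, S, T') b \<subseteq> T' b \<union> {Suc m}"
    unfolding b svt_extend_def by auto
  with svt_subset[OF data_tableau, of b] show ?thesis by fastforce
qed

lemma svt_extend_Max_le:
  assumes "svt_extend lam m (mu, S, T') b \<noteq> {}"
  shows "Max (svt_extend lam m (mu, S, T') b) \<le> Suc m"
  using assms svt_extend_subset[of b] finite_subset[OF svt_extend_subset[of b]]
  by (metis Max_in atLeastAtMost_iff finite_atLeastAtMost subsetD)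

lemma svt_extend_box:
  assumes "b \<in> young_diagram (Suc m) lam"
  shows "svt_extend lam m (mu, S, T') b \<noteq> {} \<and> svt_extend lam m (mu, S, T') b \<subseteq> {1..Suc m}"
proof -
  obtain i j where b: "b = (i, j)" by force
  show ?thesis
    using svt_box[OF data_tableau, of b] assms unfolding b
    by (cases "(i, j) \<in> young_diagram m mu") (auto simp: svt_extend_lower svt_extend_strip)
qed

lemma svt_extend_row:
  assumes "(i, j) \<in> young_diagram (Suc m) lam" "(i, Suc j) \<in> young_diagram (Suc m) lam"
  shows "Max (svt_extend lam m (mu, S, T') (i, j)) \<le> Min (svt_extend lam m (mu, S, T') (i, Suc j))"
proof (cases "(i, Suc j) \<in> young_diagram m mu")
  case True
  then have Y: "(i, j) \<in> young_diagram m mu" and "j \<noteq> mu i" using assms(1) by auto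
  then have "Max (svt_extend lam m (mu, S, T') (i, j)) = Max (T' (i, j))"
    by (simp add: svt_extend_lower)
  also have "\<dots> \<le> Min (T' (i, Suc j))" using svt_row[OF data_tableau Y True] .
  also have "\<dots> = Min (svt_extend lam m (mu, S, T') (i, Suc j))" using svt_extend_Min[OF True] by simp
  finally show ?thesis .
next
  case False
  then show ?thesis
    using assms svt_extend_box svt_extend_Max_le by (simp add: svt_extend_strip)
qed

lemma svt_extend_column:
  assumes "(i, j) \<in> young_diagram (Suc m) lam" "(Suc i, j) \<in> young_diagram (Suc m) lam"
  shows "Max (svt_extend lam m (mu, S, T') (i, j)) < Min (svt_extend lam m (mu, S, T') (Suc i, j))"
proof -
  have i: "i \<in> {1..m}" and "j \<le> lam (Suc i)" using assms by auto
  then have Y: "(i, j) \<in> young_diagram m mu" "\<not> (i \<in> S \<and> j = mu i)"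
    using assms data_interlacing[OF i] data_free_rows by fastforce+
  then have F: "svt_extend lam m (mu, S, T') (i, j) = T' (i, j)"
    by (simp only: svt_extend_lower[OF Y(1)] if_not_P[OF Y(2)] if_False Un_empty_right)
  show ?thesis
  proof (cases "(Suc i, j) \<in> young_diagram m mu")
    case True
    then show ?thesis
      using F svt_column[OF data_tableau Y(1) True] svt_extend_Min[OF True] by simp
  next
    case False
    have "Max (T' (i, j)) \<le> m"
      using svt_box[OF data_tableau Y(1)] svt_finite[OF data_tableau] by (metis Max_in atLeastAtMost_iff subsetD)
    then show ?thesis using F False assms(2) by (simp add: svt_extend_strip)
  qed
qed

lemma svt_extend_mem: "svt_extend lam m (mu, S, T') \<in> SVT lam (Suc m)"
  unfolding SVT_def
proof (intro CollectI conjI allI impI ballI)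
  fix b assume b: "b \<notin> young_diagram (Suc m) lam"
  obtain i j where ij: "b = (i, j)" by force
  with b have "(i, j) \<notin> young_diagram m mu"
    using data_diagram_subset by blast
  then show "svt_extend lam m (mu, S, T') b = {}"
    using svt_extend_strip b ij by simp
next
  fix b assume "b \<in> young_diagram (Suc m) lam"
  with svt_extend_box show "svt_extend lam m (mu, S, T') b \<noteq> {}" "svt_extend lam m (mu, S, T') b \<subseteq> {1..Suc m}"
    by blast+
next
  fix i j assume "(i, j) \<in> young_diagram (Suc m) lam \<and> (i, Suc j) \<in> young_diagram (Suc m) lam"
  then show "Max (svt_extend lam m (mu, S, T') (i, j)) \<le> Min (svt_extend lam m (mu, S, T') (i, Suc j))"
    using svt_extend_row by blast
next
  fix i j assume "(i, j) \<in> young_diagram (Suc m) lam \<and> (Suc i, j) \<in> young_diagram (Suc m) lam"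
  then show "Max (svt_extend lam m (mu, S, T') (i, j)) < Min (svt_extend lam m (mu, S, T') (Suc i, j))"
    using svt_extend_column by blast
qed

lemma lower_shape_svt_extend: "svt_lower_shape lam m (svt_extend lam m (mu, S, T')) = mu"
proof
  fix i
  let ?F = "svt_extend lam m (mu, S, T')"
  show "svt_lower_shape lam m ?F i = mu i"
  proof (cases "i \<in> {1..m}")
    case i: True
    have "j \<in> {j\<in>{1..lam i}. ?F (i, j) \<noteq> {Suc m}} \<longleftrightarrow> j \<in> {1..mu i}" for j
    proof (cases "(i, j) \<in> young_diagram m mu")
      case True
      then obtain x where "x \<in> T' (i, j)" "x \<le> m"
        using svt_box[OF data_tableau True] by fastforce
      then have "?F (i, j) \<noteq> {Suc m}"
        using svt_extend_lower[OF True] by auto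
      with True show ?thesis using data_interlacing[OF i] by auto
    next
      case False
      with i show ?thesis using svt_extend_strip[OF False] by auto
    qed
    then have "{j\<in>{1..lam i}. ?F (i, j) \<noteq> {Suc m}} = {1..mu i}"
      by blast
    then show ?thesis using i by (simp add: svt_lower_shape_def)
  next
    case False
    then show ?thesis by (simp add: svt_lower_shape_def data_extensional[OF False] del: atLeastAtMost_iff)
  qed
qed

lemma top_rows_svt_extend: "{i\<in>{1..m}. Suc m \<in> svt_extend lam m (mu, S, T') (i, mu i)} = S"
proof -
  have "Suc m \<in> svt_extend lam m (mu, S, T') (i, mu i) \<longleftrightarrow> i \<in> S" if i: "i \<in> {1..m}" for i
  proof (cases "(i, mu i) \<in> young_diagram m mu")
    case True
    have "Suc m \<notin> T' (i, mu i)" using svt_subset[OF data_tableau] by fastforce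
    then show ?thesis using svt_extend_lower[OF True] by auto
  next
    case False
    then have "mu i = 0" using i by auto
    then show ?thesis using svt_extend_strip[OF False] data_free_rows[of i] by auto
  qed
  then show ?thesis using data_free_rows by auto
qed

lemma svt_split_extend: "svt_split lam m (svt_extend lam m (mu, S, T')) = (mu, S, T')"
proof -
  have "(\<lambda>b. if b \<in> young_diagram m mu then svt_extend lam m (mu, S, T') b - {Suc m} else {}) = T'"
  proof
    fix b :: "nat \<times> nat"
    obtain i j where b: "b = (i, j)" by force
    have "Suc m \<notin> T' b" using svt_subset[OF data_tableau] by fastforce
    then show "(if b \<in> young_diagram m mu then svt_extend lam m (mu, S, T') b - {Suc m} else {}) = T' b"
      using b svt_extend_lower[of i j] svt_empty_outside[OF data_tableau, of b] by auto
  qed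
  then show ?thesis
    unfolding svt_split_def lower_shape_svt_extend top_rows_svt_extend by simp
qed

end

lemma bij_betw_svt_extend:
  assumes "is_partition_n (Suc m) lam"
  shows "bij_betw (svt_extend lam m) (branching_data lam m) (SVT lam (Suc m))"
  by (rule bij_betw_byWitness[where f' = "svt_split lam m"])
    (use assms svt_split_extend svt_extend_split svt_extend_mem svt_split_mem in auto)

lemma card_SVT_Suc:
  assumes "is_partition_n (Suc m) lam"
  shows "card (SVT lam (Suc m)) = (\<Sum>mu\<in>interlacing lam m. 2 ^ card (free_rows lam m mu) * card (SVT mu m))"
proof -
  have "card (SVT lam (Suc m)) = card (branching_data lam m)"
    using bij_betw_same_card[OF bij_betw_svt_extend[OF assms]] by simp
  also have "\<dots> = (\<Sum>mu\<in>interlacing lam m. card (Pow (free_rows lam m mu) \<times> SVT mu m))"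
    unfolding branching_data_def
    by (rule card_SigmaI) (auto simp: finite_interlacing finite_free_rows finite_SVT)
  also have "\<dots> = (\<Sum>mu\<in>interlacing lam m. 2 ^ card (free_rows lam m mu) * card (SVT mu m))"
    by (simp add: card_cartesian_product card_Pow finite_free_rows)
  finally show ?thesis .
qed

lemma card_SVT_eq_svt_det:
  assumes "is_partition_n n lam"
  shows "real (card (SVT lam n)) = svt_det n lam"
  using assms
proof (induction n arbitrary: lam)
  case 0
  then show ?case by (simp add: SVT_0 svt_det_0)
next
  case (Suc m)
  have "real (card (SVT lam (Suc m))) = (\<Sum>mu\<in>interlacing lam m. 2 ^ card (free_rows lam m mu) * real (card (SVT mu m)))"
    using card_SVT_Suc[OF Suc.prems] by simp
  also have "\<dots> = (\<Sum>mu\<in>interlacing lam m. 2 ^ card (free_rows lam m mu) * svt_det m mu)"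
    using Suc.IH is_partition_n_interlacing by simp
  also have "\<dots> = svt_det (Suc m) lam"
    using svt_det_Suc[OF Suc.prems] by simp
  finally show ?case .
qed

theorem corollary3p6:
  fixes n :: nat and lam :: "nat \<Rightarrow> nat"
  assumes "n \<ge> 1" and "is_partition_n n lam"
  shows "real (card (SVT lam n)) =
    (\<Sum>k\<in>PiE {1..n} (\<lambda>i. {0..i - 1}).
       (\<Prod>i\<in>{1..n}. real ((i - 1) choose k i)) *
       (\<Prod>(i, j)\<in>{(i, j). 1 \<le> i \<and> i < j \<and> j \<le> n}.
          (real_of_int (int (lam i) - int (lam j) + int (k i) - int (k j) + int j - int i))
          / real (j - i)))"
  using card_SVT_eq_svt_det[OF assms(2)] svt_det_eq_binomial_sum by simp

end
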